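(* Let $(M,P,g)\in\mathcal W_1$, $\dim M=2n\ge4$, and let $D$ be the connection in the context. Then the Weyl tensors of $\nabla$ and $D$ coincide: $W=W'$, where $$W=R-\frac{1}{2(n-1)}\Big\{\psi_1(\rho)-\frac{\tau}{2n-1}\pi_1\Big\},\qquad W'=R'-\frac{1}{2(n-1)}\Big\{\psi_1(\rho')-\frac{\tau'}{2n-1}\pi_1\Big\}.$$
   Context: A Riemannian almost product manifold $(M,P,g)$: smooth manifold with $(1,1)$-tensor $P$ and Riemannian metric $g$, $P^2=\mathrm{id}$, $g(Px,Py)=g(x,y)$; here $\operatorname{tr}P=0$. $\nabla$ is the Levi-Civita connection, $F(x,y,z)=g((\nabla_xP)y,z)$, Lee form $\theta(x)=g^{ij}F(e_i,e_j,x)$, $\Omega$ with $g(\Omega,x)=\theta(x)$. Class $\mathcal W_1$: $F(x,y,z)=\frac{1}{2n}\{g(x,y)\theta(z)+g(x,z)\theta(y)-g(x,Py)\theta(Pz)-g(x,Pz)\theta(Py)\}$. $D_xy=\nabla_xy+\frac{1}{2n}\{g(x,y)P\Omega-\theta(Py)x\}$. Curvatures: $R(x,y,z,w)=g(\nabla_x\nabla_yz-\nabla_y\nabla_xz-\nabla_{[x,y]}z,w)$, $\rho(y,z)=g^{ij}R(e_i,y,z,e_j)$, $\tau=g^{ij}\rho(e_i,e_j)$; $R',\rho',\tau'$ analogously for $D$. For a $(0,2)$-tensor $S$: $\psi_1(S)(x,y,z,w)=g(y,z)S(x,w)-g(x,z)S(y,w)+S(y,z)g(x,w)-S(x,z)g(y,w)$;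 $\pi_1(x,y,z,w)=g(y,z)g(x,w)-g(x,z)g(y,w)$. *)

theory Defs
  imports "HOL-Analysis.Analysis"
begin

text \<open>Local (coordinate-chart) model of a Riemannian almost product manifold.
  Points of the chart domain U and tangent vectors are elements of real^'m,
  the coordinate basis is axis i 1. Vector fields are maps real^'m => real^'m.\<close>

type_synonym 'm vfield = "real^'m \<Rightarrow> real^'m"

definition pd :: "'m::finite \<Rightarrow> (real^'m \<Rightarrow> real) \<Rightarrow> real^'m \<Rightarrow> real" where
  "pd k f p = deriv (\<lambda>t. f (p + t *\<^sub>R axis k 1)) 0"

fun iter_pd :: "'m::finite list \<Rightarrow> (real^'m \<Rightarrow> real) \<Rightarrow> real^'m \<Rightarrow> real" where
  "iter_pd [] f = f"
| "iter_pd (k # ks) f = pd k (iter_pd ks f)"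

definition smooth_fun_on :: "(real^'m::finite) set \<Rightarrow> (real^'m \<Rightarrow> real) \<Rightarrow> bool" where
  "smooth_fun_on U f \<longleftrightarrow>
     (\<forall>ks. continuous_on U (iter_pd ks f) \<and>
        (\<forall>k. \<forall>p\<in>U. (\<lambda>t. iter_pd ks f (p + t *\<^sub>R axis k 1)) differentiable (at 0)))"

text \<open>The metric g at p as the Gram matrix w.r.t. coordinate basis.\<close>
definition gv :: "(real^'m \<Rightarrow> real^'m^'m) \<Rightarrow> real^'m \<Rightarrow> real^'m \<Rightarrow> real^'m::finite \<Rightarrow> real" where
  "gv g p u v = u \<bullet> (g p *v v)"

definition ginv :: "(real^'m \<Rightarrow> real^'m^'m) \<Rightarrow> real^'m \<Rightarrow> real^'m^'m::finite" where
  "ginv g p = matrix_inv (g p)"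

definition riemannian_metric_on :: "(real^'m::finite) set \<Rightarrow> (real^'m \<Rightarrow> real^'m^'m) \<Rightarrow> bool" where
  "riemannian_metric_on U g \<longleftrightarrow>
     (\<forall>i j. smooth_fun_on U (\<lambda>p. g p $ i $ j)) \<and>
     (\<forall>p\<in>U. transpose (g p) = g p \<and> (\<forall>u. u \<noteq> 0 \<longrightarrow> gv g p u u > 0))"

definition almost_product_on :: "(real^'m::finite) set \<Rightarrow> (real^'m \<Rightarrow> real^'m^'m) \<Rightarrow> (real^'m \<Rightarrow> real^'m^'m) \<Rightarrow> bool" where
  "almost_product_on U P g \<longleftrightarrow>
     (\<forall>i j. smooth_fun_on U (\<lambda>p. P p $ i $ j)) \<and>
     (\<forall>p\<in>U. P p ** P p = mat 1 \<and>
        (\<forall>u v. gv g p (P p *v u) (P p *v v) = gv g p u v) \<and> trace (P p) = 0)"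

text \<open>Christoffel symbols of the Levi-Civita connection:
  nabla_{d_i} d_j = sum_s christ g p i j s d_s.\<close>
definition christ :: "(real^'m \<Rightarrow> real^'m^'m) \<Rightarrow> real^'m \<Rightarrow> 'm \<Rightarrow> 'm \<Rightarrow> 'm::finite \<Rightarrow> real" where
  "christ g p i j s = (1/2) * (\<Sum>l\<in>UNIV. ginv g p $ s $ l *
      (pd i (\<lambda>q. g q $ j $ l) p + pd j (\<lambda>q. g q $ i $ l) p - pd l (\<lambda>q. g q $ i $ j) p))"

definition LC :: "(real^'m \<Rightarrow> real^'m^'m) \<Rightarrow> 'm vfield \<Rightarrow> 'm vfield \<Rightarrow> 'm::finite vfield" where
  "LC g X Y p = (\<chi> s. \<Sum>i\<in>UNIV. X p $ i *
      (pd i (\<lambda>q. Y q $ s) p + (\<Sum>j\<in>UNIV. christ g p i j s * Y p $ j)))"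

definition lie :: "'m vfield \<Rightarrow> 'm vfield \<Rightarrow> 'm::finite vfield" where
  "lie X Y p = (\<chi> s. \<Sum>i\<in>UNIV. X p $ i * pd i (\<lambda>q. Y q $ s) p - Y p $ i * pd i (\<lambda>q. X q $ s) p)"

text \<open>Curvature R(x,y,z,w) = g(nabla_x nabla_y z - nabla_y nabla_x z - nabla_[x,y] z, w) of a
  connection cv, evaluated at p on tangent vectors (extended to constant vector fields).\<close>
definition curv :: "(real^'m \<Rightarrow> real^'m^'m) \<Rightarrow> ('m vfield \<Rightarrow> 'm vfield \<Rightarrow> 'm vfield)
    \<Rightarrow> real^'m \<Rightarrow> real^'m \<Rightarrow> real^'m \<Rightarrow> real^'m \<Rightarrow> real^'m::finite \<Rightarrow> real" where
  "curv g cv p x y z w =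
     (let X = (\<lambda>_. x); Y = (\<lambda>_. y); Z = (\<lambda>_. z) in
      gv g p (cv X (cv Y Z) p - cv Y (cv X Z) p - cv (lie X Y) Z p) w)"

definition ricci :: "(real^'m \<Rightarrow> real^'m^'m) \<Rightarrow> ('m vfield \<Rightarrow> 'm vfield \<Rightarrow> 'm vfield)
    \<Rightarrow> real^'m \<Rightarrow> real^'m \<Rightarrow> real^'m::finite \<Rightarrow> real" where
  "ricci g cv p y z = (\<Sum>i\<in>UNIV. \<Sum>j\<in>UNIV. ginv g p $ i $ j * curv g cv p (axis i 1) y z (axis j 1))"

definition scal :: "(real^'m \<Rightarrow> real^'m^'m) \<Rightarrow> ('m vfield \<Rightarrow> 'm vfield \<Rightarrow> 'm vfield)
    \<Rightarrow> real^'m::finite \<Rightarrow> real" where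
  "scal g cv p = (\<Sum>i\<in>UNIV. \<Sum>j\<in>UNIV. ginv g p $ i $ j * ricci g cv p (axis i 1) (axis j 1))"

definition psi1 :: "(real^'m \<Rightarrow> real^'m \<Rightarrow> real^'m \<Rightarrow> real) \<Rightarrow> (real^'m \<Rightarrow> real^'m \<Rightarrow> real^'m \<Rightarrow> real)
    \<Rightarrow> real^'m \<Rightarrow> real^'m \<Rightarrow> real^'m \<Rightarrow> real^'m \<Rightarrow> real^'m::finite \<Rightarrow> real" where
  "psi1 G S p x y z w = G p y z * S p x w - G p x z * S p y w + S p y z * G p x w - S p x z * G p y w"

definition pi1 :: "(real^'m \<Rightarrow> real^'m \<Rightarrow> real^'m \<Rightarrow> real)
    \<Rightarrow> real^'m \<Rightarrow> real^'m \<Rightarrow> real^'m \<Rightarrow> real^'m \<Rightarrow> real^'m::finite \<Rightarrow> real" where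
  "pi1 G p x y z w = G p y z * G p x w - G p x z * G p y w"

text \<open>Weyl tensor of connection cv (with n = half the dimension).\<close>
definition weyl :: "nat \<Rightarrow> (real^'m \<Rightarrow> real^'m^'m) \<Rightarrow> ('m vfield \<Rightarrow> 'm vfield \<Rightarrow> 'm vfield)
    \<Rightarrow> real^'m \<Rightarrow> real^'m \<Rightarrow> real^'m \<Rightarrow> real^'m \<Rightarrow> real^'m::finite \<Rightarrow> real" where
  "weyl n g cv p x y z w =
     curv g cv p x y z w - (1 / (2 * (real n - 1))) *
       (psi1 (gv g) (ricci g cv) p x y z w - (scal g cv p / (2 * real n - 1)) * pi1 (gv g) p x y z w)"

text \<open>F(x,y,z) = g((nabla_x P) y, z), with (nabla_x P) y = nabla_x (P y) - P (nabla_x y).\<close>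
definition Ften :: "(real^'m \<Rightarrow> real^'m^'m) \<Rightarrow> (real^'m \<Rightarrow> real^'m^'m)
    \<Rightarrow> real^'m \<Rightarrow> real^'m \<Rightarrow> real^'m \<Rightarrow> real^'m::finite \<Rightarrow> real" where
  "Ften g P p x y z =
     gv g p (LC g (\<lambda>_. x) (\<lambda>q. P q *v y) p - P p *v LC g (\<lambda>_. x) (\<lambda>_. y) p) z"

definition lee :: "(real^'m \<Rightarrow> real^'m^'m) \<Rightarrow> (real^'m \<Rightarrow> real^'m^'m)
    \<Rightarrow> real^'m \<Rightarrow> real^'m::finite \<Rightarrow> real" where
  "lee g P p x = (\<Sum>i\<in>UNIV. \<Sum>j\<in>UNIV. ginv g p $ i $ j * Ften g P p (axis i 1) (axis j 1) x)"

text \<open>Omega with g(Omega, x) = theta(x).\<close>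
definition Omega :: "(real^'m \<Rightarrow> real^'m^'m) \<Rightarrow> (real^'m \<Rightarrow> real^'m^'m) \<Rightarrow> 'm::finite vfield" where
  "Omega g P p = ginv g p *v (\<chi> k. lee g P p (axis k 1))"

definition class_W1 :: "nat \<Rightarrow> (real^'m::finite) set \<Rightarrow> (real^'m \<Rightarrow> real^'m^'m) \<Rightarrow> (real^'m \<Rightarrow> real^'m^'m) \<Rightarrow> bool" where
  "class_W1 n U P g \<longleftrightarrow> (\<forall>p\<in>U. \<forall>x y z.
     Ften g P p x y z = (1 / (2 * real n)) *
       (gv g p x y * lee g P p z + gv g p x z * lee g P p y
        - gv g p x (P p *v y) * lee g P p (P p *v z) - gv g p x (P p *v z) * lee g P p (P p *v y)))"

definition Dconn :: "nat \<Rightarrow> (real^'m \<Rightarrow> real^'m^'m) \<Rightarrow> (real^'m \<Rightarrow> real^'m^'m)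
    \<Rightarrow> 'm vfield \<Rightarrow> 'm vfield \<Rightarrow> 'm::finite vfield" where
  "Dconn n g P X Y p = LC g X Y p + (1 / (2 * real n)) *\<^sub>R
     (gv g p (X p) (Y p) *\<^sub>R (P p *v Omega g P p) - lee g P p (P p *v Y p) *\<^sub>R X p)"

end

theory Submission
  imports Defs
begin

(* Put W = P Omega and c = 1/(2n).  Since P is g-symmetric, theta(P y) = g(W,y),
   so on constant coordinate fields D_x y = nabla_x y + c (g(x,y) W - g(W,y) x): D arises from
   the Levi-Civita connection by a semi-symmetric metric change.  Expanding D_x D_y z - D_y D_x z
   with the Christoffel map Gamma and metric compatibility of nabla, the curvature tensors differ
   by psi_1(S), where S(u,v) = c g(nabla_u W, v) + c^2 g(W,u) g(W,v) - c^2/2 g(W,W) g(u,v).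
   Contracting psi_1(S) once and twice shows that the Weyl tensor does not change when psi_1(S)
   is added to the curvature, for any bilinear S; hence W = W'.  Only the almost product
   structure enters the argument. *)


subsection \<open>Coordinate partial derivatives\<close>

text \<open>Differentiability of f along the k-th coordinate line through p; this is exactly what
  is needed for the usual rules for the partial derivative pd.\<close>
definition has_pd :: "'m::finite \<Rightarrow> (real^'m \<Rightarrow> real) \<Rightarrow> real^'m \<Rightarrow> bool" where
  "has_pd k f p \<longleftrightarrow> (\<lambda>t. f (p + t *\<^sub>R axis k 1)) differentiable (at 0)"

lemma has_pd_DERIV:
  "has_pd k f p \<Longrightarrow> ((\<lambda>t. f (p + t *\<^sub>R axis k 1)) has_real_derivative pd k f p) (at 0)"
  unfolding has_pd_def pd_def by (simp add: DERIV_deriv_iff_real_differentiable)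

lemma has_pd_const [simp]: "has_pd k (\<lambda>q. c) p"
  unfolding has_pd_def by simp

lemma pd_const [simp]: "pd k (\<lambda>q. c) p = 0"
  unfolding pd_def by (rule DERIV_imp_deriv) simp

lemma has_pd_add: "has_pd k f p \<Longrightarrow> has_pd k h p \<Longrightarrow> has_pd k (\<lambda>q. f q + h q) p"
  and has_pd_diff: "has_pd k f p \<Longrightarrow> has_pd k h p \<Longrightarrow> has_pd k (\<lambda>q. f q - h q) p"
  and has_pd_mult: "has_pd k f p \<Longrightarrow> has_pd k h p \<Longrightarrow> has_pd k (\<lambda>q. f q * h q) p"
  unfolding has_pd_def by simp_all

lemma has_pd_divide:
  "has_pd k f p \<Longrightarrow> has_pd k h p \<Longrightarrow> h p \<noteq> 0 \<Longrightarrow> has_pd k (\<lambda>q. f q / h q) p"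
  unfolding has_pd_def by (intro differentiable_divide) auto

lemma has_pd_sum:
  "finite A \<Longrightarrow> (\<And>a. a \<in> A \<Longrightarrow> has_pd k (f a) p) \<Longrightarrow> has_pd k (\<lambda>q. \<Sum>a\<in>A. f a q) p"
  unfolding has_pd_def by (intro differentiable_sum) auto

lemma has_pd_prod:
  "finite A \<Longrightarrow> (\<And>a. a \<in> A \<Longrightarrow> has_pd k (f a) p) \<Longrightarrow> has_pd k (\<lambda>q. \<Prod>a\<in>A. f a q) p"
  by (induction A rule: finite_induct) (simp_all add: has_pd_mult)

lemma pd_add: "has_pd k f p \<Longrightarrow> has_pd k h p \<Longrightarrow> pd k (\<lambda>q. f q + h q) p = pd k f p + pd k h p"
  unfolding pd_def[of k "\<lambda>q. f q + h q"]
  by (rule DERIV_imp_deriv, rule DERIV_add[OF has_pd_DERIV has_pd_DERIV])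

lemma pd_diff: "has_pd k f p \<Longrightarrow> has_pd k h p \<Longrightarrow> pd k (\<lambda>q. f q - h q) p = pd k f p - pd k h p"
  unfolding pd_def[of k "\<lambda>q. f q - h q"]
  by (rule DERIV_imp_deriv, rule DERIV_diff[OF has_pd_DERIV has_pd_DERIV])

lemma pd_mult:
  assumes "has_pd k f p" "has_pd k h p"
  shows "pd k (\<lambda>q. f q * h q) p = pd k f p * h p + f p * pd k h p"
  unfolding pd_def[of k "\<lambda>q. f q * h q"]
  using DERIV_mult[OF has_pd_DERIV[OF assms(1)] has_pd_DERIV[OF assms(2)]]
  by (intro DERIV_imp_deriv) (simp add: mult.commute)

lemma pd_sum:
  "finite A \<Longrightarrow> (\<And>a. a \<in> A \<Longrightarrow> has_pd k (f a) p) \<Longrightarrow>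
   pd k (\<lambda>q. \<Sum>a\<in>A. f a q) p = (\<Sum>a\<in>A. pd k (f a) p)"
  unfolding pd_def[of k "\<lambda>q. \<Sum>a\<in>A. f a q"]
  by (rule DERIV_imp_deriv, rule DERIV_sum) (rule has_pd_DERIV, auto)

lemma eventually_line_in_open:
  fixes p :: "real^'m::finite"
  assumes "open U" "p \<in> U"
  shows "eventually (\<lambda>t. p + t *\<^sub>R axis k 1 \<in> U) (nhds (0::real))"
proof -
  have "open ((\<lambda>t::real. p + t *\<^sub>R axis k 1) -` U)"
    using assms(1) by (intro open_vimage continuous_intros)
  then show ?thesis
    using assms(2) eventually_nhds_in_open[of "(\<lambda>t::real. p + t *\<^sub>R axis k 1) -` U" 0] by simp
qed

lemma pd_cong: "open U \<Longrightarrow> p \<in> U \<Longrightarrow> (\<And>q. q \<in> U \<Longrightarrow> f q = h q) \<Longrightarrow> pd k f p = pd k h p"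
  unfolding pd_def by (rule deriv_cong_ev[OF eventually_mono[OF eventually_line_in_open]]) auto

lemma has_pd_cong:
  "open U \<Longrightarrow> p \<in> U \<Longrightarrow> (\<And>q. q \<in> U \<Longrightarrow> f q = h q) \<Longrightarrow> has_pd k f p = has_pd k h p"
  unfolding has_pd_def real_differentiable_def
  by (intro ex_cong1 DERIV_cong_ev[OF refl eventually_mono[OF eventually_line_in_open] refl]) auto

lemma smooth_has_pd: "smooth_fun_on U f \<Longrightarrow> p \<in> U \<Longrightarrow> has_pd k f p"
  and smooth_has_pd_pd: "smooth_fun_on U f \<Longrightarrow> p \<in> U \<Longrightarrow> has_pd k (pd l f) p"
  unfolding smooth_fun_on_def has_pd_def by (metis iter_pd.simps)+

lemma has_pd_det: "(\<And>i j. has_pd k (\<lambda>q. M q $ i $ j) p) \<Longrightarrow> has_pd k (\<lambda>q. det (M q)) p"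
  unfolding det_def by (intro has_pd_sum has_pd_mult has_pd_prod has_pd_const) auto

lemma has_pd_mv:
  "(\<And>i j. has_pd k (\<lambda>q. M q $ i $ j) p) \<Longrightarrow> (\<And>j. has_pd k (\<lambda>q. v q $ j) p)
   \<Longrightarrow> has_pd k (\<lambda>q. (M q *v v q) $ i) p"
  unfolding matrix_vector_mult_def by (simp add: has_pd_sum has_pd_mult)

lemma has_pd_gv:
  "(\<And>i j. has_pd k (\<lambda>q. g q $ i $ j) p) \<Longrightarrow> (\<And>j. has_pd k (\<lambda>q. u q $ j) p)
   \<Longrightarrow> (\<And>j. has_pd k (\<lambda>q. v q $ j) p) \<Longrightarrow> has_pd k (\<lambda>q. gv g q (u q) (v q)) p"
  unfolding gv_def inner_vec_def by (simp add: has_pd_sum has_pd_mult has_pd_mv)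


subsection \<open>Linear algebra\<close>

text \<open>The library defines matrix_inv by choice; for an invertible matrix it is a two-sided inverse.\<close>
lemma matrix_inv_props:
  fixes A :: "real^'n::finite^'n"
  assumes "invertible A"
  shows "A ** matrix_inv A = mat 1" "matrix_inv A ** A = mat 1"
  using assms unfolding invertible_def matrix_inv_def by (metis (mono_tags, lifting) someI_ex)+

text \<open>Cramer's rule for the entries of the inverse; it shows that the inverse metric is as
  regular as the metric.\<close>
lemma matrix_inv_entry:
  fixes A :: "real^'n::finite^'n"
  assumes "invertible A"
  shows "matrix_inv A $ a $ b = det (\<chi> i j. if j = a then axis b 1 $ i else A$i$j) / det A"
proof -
  have "det A \<noteq> 0" using assms invertible_det_nz by blast
  moreover have "A *v (matrix_inv A *v axis b 1) = axis b 1"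
    by (simp add: matrix_vector_mul_assoc matrix_inv_props[OF assms])
  ultimately have "matrix_inv A *v axis b 1
      = (\<chi> k. det (\<chi> i j. if j = k then axis b 1 $ i else A$i$j) / det A)"
    using cramer by blast
  then show ?thesis by (simp add: matrix_vector_mult_basis column_def vec_eq_iff)
qed

lemma inner_matrix_left: "((A::real^'n::finite^'k::finite) *v x) \<bullet> y = x \<bullet> (transpose A *v y)"
  by (metis dot_lmul_matrix vector_transpose_matrix)

lemma inner_matrix_right: "x \<bullet> ((A::real^'n::finite^'k::finite) *v y) = (transpose A *v x) \<bullet> y"
  by (metis dot_lmul_matrix inner_commute vector_transpose_matrix)

lemma matrix_vector_mult_sum:
  "(A::real^'n::finite^'k::finite) *v (\<Sum>i\<in>S. f i) = (\<Sum>i\<in>S. A *v f i)"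
  by (induction S rule: infinite_finite_induct) (simp_all add: matrix_vector_right_distrib)

lemma double_sum_bilinear:
  "(\<Sum>i\<in>UNIV. \<Sum>j\<in>UNIV. (A::real^'n::finite^'m::finite)$i$j * (a$i * b$j)) = a \<bullet> (A *v b)"
  by (simp add: inner_vec_def matrix_vector_mult_def sum_distrib_left mult_ac)

lemma gv_axis_left: "gv g p (axis i 1) z = (g p *v z)$i"
  by (simp add: gv_def inner_axis')

lemma gv_axis_right: "gv g p y (axis j 1) = (transpose (g p) *v y)$j"
  by (simp add: gv_def inner_vec_def matrix_vector_mult_def transpose_def axis_def
      if_distrib mult.commute cong: if_cong)

lemma gv_axis_axis: "gv g p (axis i 1) (axis j 1) = g p $ i $ j"
  by (simp add: gv_axis_left matrix_vector_mult_basis column_def)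

lemma gv_expand_left: "gv g p u v = (\<Sum>i\<in>UNIV. u$i * gv g p (axis i 1) v)"
  by (simp add: gv_def inner_axis' inner_vec_def[of u])

lemma gv_expand_right: "gv g p u v = (\<Sum>j\<in>UNIV. v$j * gv g p u (axis j 1))"
proof -
  have "gv g p u v = (\<Sum>a\<in>UNIV. \<Sum>j\<in>UNIV. u$a * g p $ a $ j * v$j)"
    by (simp add: gv_def inner_vec_def matrix_vector_mult_def sum_distrib_left mult_ac)
  also have "\<dots> = (\<Sum>j\<in>UNIV. \<Sum>a\<in>UNIV. u$a * g p $ a $ j * v$j)" by (rule sum.swap)
  also have "\<dots> = (\<Sum>j\<in>UNIV. v$j * gv g p u (axis j 1))"
    by (simp add: gv_def inner_vec_def matrix_vector_mult_basis column_def sum_distrib_left mult_ac)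
  finally show ?thesis .
qed

lemma gv_sum_left: "gv g p (\<Sum>i\<in>UNIV. r i *\<^sub>R f i) v = (\<Sum>i\<in>UNIV. r i * gv g p (f i) v)"
  by (simp add: gv_def inner_sum_left)

subsection \<open>Curvature shift of a semi-symmetric change of connection\<close>

text \<open>Gam is a symmetric Christoffel map,
  gp the metric with Gram matrix G, W a vector and dW its coordinate derivative.  If Dl x y is
  the second-order correction D_x D_y z - nabla_x nabla_y z for the connection
  D_x y = nabla_x y + c (gp x y W - gp W y x), then its antisymmetrisation is psi_1(S) with
  S(u,v) = c gp(nabla_u W, v) + c^2 gp(W,u) gp(W,v) - c^2/2 gp(W,W) gp(u,v).  The terms Dl
  contains after using metric compatibility, dlt x u v = gp(Gam x u, v) + gp(u, Gam x v),
  cancel in the antisymmetrisation together with all Gam-terms except nabla_u W.\<close>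
lemma semi_symmetric_curvature_shift:
  fixes G :: "real^'m^'m::finite" and Gam :: "real^'m \<Rightarrow> real^'m \<Rightarrow> real^'m"
    and dW :: "real^'m \<Rightarrow> real^'m" and W x y z w :: "real^'m" and c :: real
  assumes G_sym: "transpose G = G"
    and Gam_sym: "\<And>a b. Gam a b = Gam b a"
    and Gam_add: "\<And>a u v. Gam a (u + v) = Gam a u + Gam a v"
    and Gam_scale: "\<And>a r u. Gam a (r *\<^sub>R u) = r *\<^sub>R Gam a u"
  defines "gp \<equiv> \<lambda>u v. u \<bullet> (G *v v)"
  defines "T \<equiv> \<lambda>y. gp y z *\<^sub>R W - gp W z *\<^sub>R y"
  defines "dlt \<equiv> \<lambda>x u v. gp (Gam x u) v + gp u (Gam x v)"
  defines "Dl \<equiv> \<lambda>x y. c *\<^sub>R (dlt x y z *\<^sub>R W + gp y z *\<^sub>R dW x - (gp (dW x) z + dlt x W z) *\<^sub>R y)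
       + Gam x (c *\<^sub>R T y) + c *\<^sub>R (gp x (Gam y z + c *\<^sub>R T y) *\<^sub>R W - gp W (Gam y z + c *\<^sub>R T y) *\<^sub>R x)"
  defines "S \<equiv> \<lambda>u v. c * gp (dW u + Gam u W) v + c^2 * gp W u * gp W v - c^2/2 * gp W W * gp u v"
  shows "gp (Dl x y - Dl y x) w = gp y z * S x w - gp x z * S y w + S y z * gp x w - S x z * gp y w"
proof -
  have gp_sym: "gp u v = gp v u" for u v
    unfolding gp_def by (metis G_sym dot_lmul_matrix inner_commute vector_transpose_matrix)
  have gp_lin: "gp (u + v) t = gp u t + gp v t" "gp t (u + v) = gp t u + gp t v"
    "gp (u - v) t = gp u t - gp v t" "gp t (u - v) = gp t u - gp t v"
    "gp (r *\<^sub>R u) t = r * gp u t" "gp t (r *\<^sub>R u) = r * gp t u" for u v t r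
    unfolding gp_def
    by (simp_all add: inner_add_left inner_add_right inner_diff_left inner_diff_right
        matrix_vector_right_distrib matrix_vector_mult_diff_distrib matrix_vector_mult_scaleR)
  have Gam_diff: "Gam a (u - v) = Gam a u - Gam a v" for a u v
    by (metis Gam_add add_diff_cancel diff_add_cancel)
  show ?thesis
    unfolding Dl_def T_def dlt_def S_def
    by (simp add: gp_lin Gam_add Gam_diff Gam_scale algebra_simps power2_eq_square gp_sym Gam_sym)
qed


subsection \<open>Invariance of the Weyl tensor under adding psi_1(S)\<close>

text \<open>Contractions with the inverse metric at a point where g is symmetric and ginv is its
  inverse.  S is any bilinear form, given by its coordinate expansions.\<close>
context
  fixes g :: "real^'m \<Rightarrow> real^'m^'m::finite" and p :: "real^'m"
  assumes g_sym: "transpose (g p) = g p"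
    and ginv_left: "ginv g p ** g p = mat 1" and ginv_right: "g p ** ginv g p = mat 1"
begin

lemma contract_metric:
  "(\<Sum>i\<in>UNIV. \<Sum>j\<in>UNIV. ginv g p $i$j * gv g p (axis i 1) (axis j 1)) = real CARD('m)"
proof -
  have "(\<Sum>i\<in>UNIV. \<Sum>j\<in>UNIV. ginv g p $i$j * gv g p (axis i 1) (axis j 1))
      = (\<Sum>i\<in>UNIV. (ginv g p ** transpose (g p))$i$i)"
    by (simp add: gv_axis_axis matrix_matrix_mult_def transpose_def)
  then show ?thesis using ginv_left g_sym by (simp add: mat_def)
qed

lemma contract_metric_left:
  assumes S_expand: "\<And>u v. S u v = (\<Sum>j\<in>UNIV. v$j * S u (axis j 1))"
  shows "(\<Sum>i\<in>UNIV. \<Sum>j\<in>UNIV. ginv g p $i$j * (gv g p (axis i 1) z * S y (axis j 1))) = S y z"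
proof -
  have "(\<Sum>i\<in>UNIV. \<Sum>j\<in>UNIV. ginv g p $i$j * (gv g p (axis i 1) z * S y (axis j 1)))
     = (g p *v z) \<bullet> (ginv g p *v (\<chi> j. S y (axis j 1)))"
    by (simp add: gv_axis_left double_sum_bilinear[symmetric])
  also have "\<dots> = z \<bullet> (\<chi> j. S y (axis j 1))"
    by (simp add: inner_matrix_left g_sym matrix_vector_mul_assoc ginv_right)
  also have "\<dots> = S y z" using S_expand[of y z] by (simp add: inner_vec_def mult_ac)
  finally show ?thesis .
qed

lemma contract_metric_right:
  assumes S_expand: "\<And>u v. S u v = (\<Sum>i\<in>UNIV. u$i * S (axis i 1) v)"
  shows "(\<Sum>i\<in>UNIV. \<Sum>j\<in>UNIV. ginv g p $i$j * (S (axis i 1) z * gv g p y (axis j 1))) = S y z"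
proof -
  have "(\<Sum>i\<in>UNIV. \<Sum>j\<in>UNIV. ginv g p $i$j * (S (axis i 1) z * gv g p y (axis j 1)))
     = (\<chi> i. S (axis i 1) z) \<bullet> (ginv g p *v (g p *v y))"
    by (simp add: gv_axis_right g_sym double_sum_bilinear[symmetric])
  also have "\<dots> = (\<chi> i. S (axis i 1) z) \<bullet> y"
    by (simp add: matrix_vector_mul_assoc ginv_left)
  also have "\<dots> = S y z" using S_expand[of y z] by (simp add: inner_vec_def mult_ac)
  finally show ?thesis .
qed

definition gtrace :: "(real^'m \<Rightarrow> real^'m \<Rightarrow> real) \<Rightarrow> real" where
  "gtrace S = (\<Sum>i\<in>UNIV. \<Sum>j\<in>UNIV. ginv g p $i$j * S (axis i 1) (axis j 1))"

context
  fixes cv cv' and S :: "real^'m \<Rightarrow> real^'m \<Rightarrow> real"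
  assumes curv_shift: "\<And>x y z w. curv g cv' p x y z w = curv g cv p x y z w + psi1 (gv g) (\<lambda>_. S) p x y z w"
    and S_expand_left: "\<And>u v. S u v = (\<Sum>i\<in>UNIV. u$i * S (axis i 1) v)"
    and S_expand_right: "\<And>u v. S u v = (\<Sum>j\<in>UNIV. v$j * S u (axis j 1))"
begin

lemma ricci_shift:
  "ricci g cv' p y z = ricci g cv p y z + gtrace S * gv g p y z + (real CARD('m) - 2) * S y z"
proof -
  have "ricci g cv' p y z = ricci g cv p y z + gv g p y z * gtrace S
     - (\<Sum>i\<in>UNIV. \<Sum>j\<in>UNIV. ginv g p $i$j * (gv g p (axis i 1) z * S y (axis j 1)))
     + S y z * (\<Sum>i\<in>UNIV. \<Sum>j\<in>UNIV. ginv g p $i$j * gv g p (axis i 1) (axis j 1))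
     - (\<Sum>i\<in>UNIV. \<Sum>j\<in>UNIV. ginv g p $i$j * (S (axis i 1) z * gv g p y (axis j 1)))"
    unfolding ricci_def curv_shift psi1_def gtrace_def
    by (simp add: algebra_simps sum.distrib sum_subtractf sum_distrib_left)
  then show ?thesis
    using contract_metric contract_metric_left[where S=S, OF S_expand_right]
      contract_metric_right[where S=S, OF S_expand_left]
    by (simp add: algebra_simps)
qed

lemma scal_shift:
  "scal g cv' p = scal g cv p + (2 * real CARD('m) - 2) * gtrace S"
proof -
  have "scal g cv' p = scal g cv p
      + gtrace S * (\<Sum>i\<in>UNIV. \<Sum>j\<in>UNIV. ginv g p $i$j * gv g p (axis i 1) (axis j 1))
      + (real CARD('m) - 2) * (\<Sum>i\<in>UNIV. \<Sum>j\<in>UNIV. ginv g p $i$j * S (axis i 1) (axis j 1))"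
    unfolding scal_def ricci_shift
    by (simp add: algebra_simps sum.distrib sum_subtractf sum_distrib_left)
  also have "\<dots> = scal g cv p + (2 * real CARD('m) - 2) * gtrace S"
    unfolding contract_metric gtrace_def[symmetric] by (simp add: algebra_simps)
  finally show ?thesis .
qed

lemma weyl_shift_invariant:
  assumes card: "CARD('m) = 2 * n" and n2: "n \<ge> 2"
  shows "weyl n g cv p x y z w = weyl n g cv' p x y z w"
proof -
  have n1: "real n - 1 \<noteq> 0" "2 * real n - 1 \<noteq> 0" using n2 by auto
  have "2 + real n * (real n * 4) - real n * 6 = 2 * (real n - 1) * (2 * real n - 1)" by algebra
  then have n3: "2 + real n * (real n * 4) - real n * 6 \<noteq> 0" using n1 by simp
  show ?thesis
    unfolding weyl_def psi1_def pi1_def ricci_shift scal_shift curv_shift card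
    using n1 n3 by (simp add: field_simps)
qed

end

end

subsection \<open>The Lee form\<close>

lemma lee_expand: "lee g P q u = (\<chi> k. lee g P q (axis k 1)) \<bullet> u"
proof -
  define L where "L = (\<Sum>i\<in>UNIV. \<Sum>j\<in>UNIV. ginv g q $ i $ j *\<^sub>R (transpose (g q) *v
     (LC g (\<lambda>_. axis i 1) (\<lambda>q. P q *v axis j 1) q - P q *v LC g (\<lambda>_. axis i 1) (\<lambda>_. axis j 1) q)))"
  have L_inner: "lee g P q v = L \<bullet> v" for v
    unfolding lee_def Ften_def gv_def L_def inner_matrix_right by (simp add: inner_sum_left)
  then have "L = (\<chi> k. lee g P q (axis k 1))"
    by (simp add: vec_eq_iff inner_axis)
  then show ?thesis using L_inner by simp
qed


subsection \<open>A chart with a Riemannian metric and an almost product structure\<close>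

locale almost_product_chart =
  fixes U :: "(real^'m::finite) set" and g P :: "real^'m \<Rightarrow> real^'m^'m"
  assumes open_U: "open U" and metric: "riemannian_metric_on U g"
    and almost_product: "almost_product_on U P g"
begin

lemma metric_sym: "p \<in> U \<Longrightarrow> transpose (g p) = g p"
  using metric unfolding riemannian_metric_on_def by blast

lemma metric_entry_sym:
  assumes "p \<in> U" shows "g p $ i $ j = g p $ j $ i"
proof -
  have "transpose (g p) $ j $ i = g p $ j $ i" using metric_sym[OF assms] by simp
  then show ?thesis by (simp add: transpose_def)
qed

lemma metric_invertible:
  assumes "p \<in> U" shows "invertible (g p)"
proof -
  have "x = 0" if "g p *v x = 0" for x
  proof (rule ccontr)
    assume "x \<noteq> 0"
    then have "gv g p x x > 0" using metric assms unfolding riemannian_metric_on_def by blast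
    with that show False by (simp add: gv_def)
  qed
  then show ?thesis using matrix_left_invertible_ker invertible_left_inverse by blast
qed

lemma ginv_left: "p \<in> U \<Longrightarrow> ginv g p ** g p = mat 1"
  and ginv_right: "p \<in> U \<Longrightarrow> g p ** ginv g p = mat 1"
  by (simp_all add: ginv_def metric_invertible matrix_inv_props)

text \<open>P is self-adjoint for g, because it is a g-isometry and an involution.\<close>
lemma gv_P_adjoint:
  assumes "q \<in> U" shows "gv g q (P q *v u) v = gv g q u (P q *v v)"
proof -
  have PP: "P q ** P q = mat 1" and isometry: "\<And>u v. gv g q (P q *v u) (P q *v v) = gv g q u v"
    using almost_product assms unfolding almost_product_on_def by blast+
  have "gv g q (P q *v u) v = gv g q (P q *v (P q *v u)) (P q *v v)" by (rule isometry[symmetric])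
  also have "P q *v (P q *v u) = u" by (simp add: matrix_vector_mul_assoc PP)
  finally show ?thesis .
qed

lemma gv_Omega:
  assumes "q \<in> U" shows "gv g q (Omega g P q) u = lee g P q u"
proof -
  have "transpose (ginv g q) ** g q = transpose (transpose (g q) ** ginv g q)"
    by (simp add: matrix_transpose_mul)
  also have "\<dots> = mat 1" using metric_sym[OF assms] ginv_right[OF assms] by (simp add: transpose_mat)
  finally have "transpose (ginv g q) ** g q = mat 1" .
  then have "gv g q (Omega g P q) u = (\<chi> k. lee g P q (axis k 1)) \<bullet> u"
    unfolding gv_def Omega_def inner_matrix_left matrix_vector_mul_assoc by simp
  then show ?thesis by (simp only: lee_expand[of g P q u, symmetric])
qed

definition POmega :: "'m vfield" where
  "POmega q = P q *v Omega g P q"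

lemma lee_P: "q \<in> U \<Longrightarrow> lee g P q (P q *v z) = gv g q (POmega q) z"
  by (simp add: POmega_def gv_P_adjoint gv_Omega)

lemma has_pd_metric: "p \<in> U \<Longrightarrow> has_pd k (\<lambda>q. g q $ i $ j) p"
  and has_pd_pd_metric: "p \<in> U \<Longrightarrow> has_pd k (pd l (\<lambda>q. g q $ i $ j)) p"
  using metric unfolding riemannian_metric_on_def by (blast intro: smooth_has_pd smooth_has_pd_pd)+

lemma has_pd_P: "p \<in> U \<Longrightarrow> has_pd k (\<lambda>q. P q $ i $ j) p"
  and has_pd_pd_P: "p \<in> U \<Longrightarrow> has_pd k (pd l (\<lambda>q. P q $ i $ j)) p"
  using almost_product unfolding almost_product_on_def by (blast intro: smooth_has_pd smooth_has_pd_pd)+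

lemma has_pd_ginv:
  assumes p: "p \<in> U" shows "has_pd k (\<lambda>q. ginv g q $ a $ b) p"
proof -
  have "has_pd k (\<lambda>q. det (\<chi> i j. if j = a then axis b 1 $ i else g q$i$j) / det (g q)) p"
  proof (rule has_pd_divide)
    show "has_pd k (\<lambda>q. det (\<chi> i j. if j = a then axis b 1 $ i else g q$i$j)) p"
    proof (rule has_pd_det)
      fix i j show "has_pd k (\<lambda>q. (\<chi> i j. if j = a then axis b 1 $ i else g q$i$j) $ i $ j) p"
        by (cases "j = a") (simp_all add: has_pd_metric p)
    qed
    show "has_pd k (\<lambda>q. det (g q)) p" by (rule has_pd_det) (simp add: has_pd_metric p)
    show "det (g p) \<noteq> 0" using metric_invertible[OF p] invertible_det_nz by blast
  qed
  moreover have "has_pd k (\<lambda>q. ginv g q $ a $ b) p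
      = has_pd k (\<lambda>q. det (\<chi> i j. if j = a then axis b 1 $ i else g q$i$j) / det (g q)) p"
    by (rule has_pd_cong[OF open_U p]) (unfold ginv_def, rule matrix_inv_entry[OF metric_invertible])
  ultimately show ?thesis by simp
qed

lemma has_pd_christ: "p \<in> U \<Longrightarrow> has_pd k (\<lambda>q. christ g q i j s) p"
  unfolding christ_def
  by (intro has_pd_mult has_pd_const has_pd_sum has_pd_add has_pd_diff has_pd_ginv has_pd_pd_metric)
    simp_all

lemma pd_P_apply:
  "q \<in> U \<Longrightarrow> pd i (\<lambda>q'. (P q' *v y) $ s) q = (\<Sum>b\<in>UNIV. pd i (\<lambda>q'. P q' $ s $ b) q * y $ b)"
  unfolding matrix_vector_mult_def by (simp add: pd_sum pd_mult has_pd_P has_pd_mult)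

lemma has_pd_pd_P_apply:
  assumes p: "p \<in> U" shows "has_pd k (\<lambda>q. pd i (\<lambda>q'. (P q' *v y) $ s) q) p"
proof -
  have "has_pd k (\<lambda>q. \<Sum>b\<in>UNIV. pd i (\<lambda>q'. P q' $ s $ b) q * y $ b) p"
    by (intro has_pd_sum has_pd_mult has_pd_pd_P p has_pd_const) simp
  moreover have "has_pd k (\<lambda>q. pd i (\<lambda>q'. (P q' *v y) $ s) q) p
      = has_pd k (\<lambda>q. \<Sum>b\<in>UNIV. pd i (\<lambda>q'. P q' $ s $ b) q * y $ b) p"
    by (rule has_pd_cong[OF open_U p]) (rule pd_P_apply)
  ultimately show ?thesis by simp
qed

lemma has_pd_LC_P: "p \<in> U \<Longrightarrow> has_pd k (\<lambda>q. LC g (\<lambda>_. x) (\<lambda>q'. P q' *v y) q $ s) p"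
  unfolding LC_def
  by (simp, intro has_pd_sum has_pd_mult has_pd_add has_pd_const has_pd_pd_P_apply has_pd_christ
      has_pd_mv has_pd_P) simp_all

lemma has_pd_LC_const: "p \<in> U \<Longrightarrow> has_pd k (\<lambda>q. LC g (\<lambda>_. x) (\<lambda>_. y) q $ s) p"
  unfolding LC_def by (simp, intro has_pd_sum has_pd_mult has_pd_const has_pd_christ) simp_all

lemma has_pd_POmega: "p \<in> U \<Longrightarrow> has_pd k (\<lambda>q. POmega q $ s) p"
proof -
  assume p: "p \<in> U"
  have "has_pd k (\<lambda>q. Ften g P q x y z) p" for x y z
    unfolding Ften_def using p
    by (intro has_pd_gv has_pd_metric has_pd_const)
      (simp_all add: has_pd_diff has_pd_LC_P has_pd_mv has_pd_P has_pd_LC_const)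
  then have "has_pd k (\<lambda>q. lee g P q u) p" for u
    unfolding lee_def using p by (intro has_pd_sum has_pd_mult has_pd_ginv) simp_all
  then show ?thesis
    unfolding POmega_def Omega_def using p by (intro has_pd_mv has_pd_P has_pd_ginv) simp_all
qed


text \<open>The Christoffel symbols as a bilinear map: Gamma p x u = nabla_x u for constant fields.\<close>
definition christ_mat :: "real^'m \<Rightarrow> 'm \<Rightarrow> real^'m^'m" where
  "christ_mat p i = (\<chi> s j. christ g p i j s)"

definition Gamma :: "real^'m \<Rightarrow> real^'m \<Rightarrow> real^'m \<Rightarrow> real^'m" where
  "Gamma p x u = (\<Sum>i\<in>UNIV. x$i *\<^sub>R (christ_mat p i *v u))"

definition dir_deriv :: "'m vfield \<Rightarrow> real^'m \<Rightarrow> real^'m \<Rightarrow> real^'m" where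
  "dir_deriv F x p = (\<chi> s. \<Sum>i\<in>UNIV. x$i * pd i (\<lambda>q. F q $ s) p)"

lemma LC_const: "LC g (\<lambda>_. x) (\<lambda>_. u) q = Gamma q x u"
  unfolding LC_def Gamma_def christ_mat_def
  by (simp add: vec_eq_iff matrix_vector_mult_def sum_component)

lemma LC_field: "LC g (\<lambda>_. x) F p = dir_deriv F x p + Gamma p x (F p)"
  unfolding LC_def Gamma_def christ_mat_def dir_deriv_def
  by (simp add: vec_eq_iff matrix_vector_mult_def sum_component distrib_left sum.distrib)

lemma dir_deriv_expand: "dir_deriv F x p = (\<Sum>i\<in>UNIV. x$i *\<^sub>R (\<chi> a. pd i (\<lambda>q. F q $ a) p))"
  unfolding dir_deriv_def by (simp add: vec_eq_iff sum_component)

lemma Gamma_add: "Gamma p x (u + v) = Gamma p x u + Gamma p x v"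
  unfolding Gamma_def by (simp add: matrix_vector_right_distrib scaleR_add_right sum.distrib)

lemma Gamma_scale: "Gamma p x (r *\<^sub>R u) = r *\<^sub>R Gamma p x u"
  unfolding Gamma_def by (simp add: matrix_vector_mult_scaleR scaleR_sum_right mult.commute)

lemma Gamma_diff: "Gamma p x (u - v) = Gamma p x u - Gamma p x v"
  unfolding Gamma_def by (simp add: matrix_vector_mult_diff_distrib scaleR_diff_right sum_subtractf)

lemma Gamma_expand: "Gamma p x u = (\<Sum>i\<in>UNIV. x$i *\<^sub>R Gamma p (axis i 1) u)"
  and dir_deriv_axis_expand: "dir_deriv F x p = (\<Sum>i\<in>UNIV. x$i *\<^sub>R dir_deriv F (axis i 1) p)"
  unfolding Gamma_def dir_deriv_expand
  by (simp_all add: axis_def if_distrib[where f="\<lambda>a. a *\<^sub>R w" for w] cong: if_cong)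

lemma pd_metric_sym: "p \<in> U \<Longrightarrow> pd l (\<lambda>q. g q $ i $ j) p = pd l (\<lambda>q. g q $ j $ i) p"
  by (rule pd_cong[OF open_U]) (auto simp: metric_entry_sym)

lemma Gamma_sym:
  assumes p: "p \<in> U" shows "Gamma p x u = Gamma p u x"
proof -
  have christ_sym: "christ g p i j s = christ g p j i s" for i j s
    unfolding christ_def by (simp add: pd_metric_sym[OF p, of _ i j] algebra_simps)
  have "(\<Sum>i\<in>UNIV. x$i * (\<Sum>j\<in>UNIV. christ g p i j s * u$j))
      = (\<Sum>i\<in>UNIV. u$i * (\<Sum>j\<in>UNIV. christ g p i j s * x$j))" for s
  proof -
    have "(\<Sum>i\<in>UNIV. x$i * (\<Sum>j\<in>UNIV. christ g p i j s * u$j))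
        = (\<Sum>j\<in>UNIV. \<Sum>i\<in>UNIV. x$i * christ g p i j s * u$j)"
      by (subst sum.swap) (simp add: sum_distrib_left mult_ac)
    then show ?thesis by (simp add: sum_distrib_left christ_sym[of _ _ s] mult_ac)
  qed
  then show ?thesis unfolding Gamma_def christ_mat_def
    by (simp add: vec_eq_iff matrix_vector_mult_def sum_component)
qed

text \<open>In matrix form, g Gamma_i is half the matrix of
  Christoffel symbols of the first kind, whose symmetric part is the derivative of g.\<close>
definition dmetric :: "real^'m \<Rightarrow> 'm \<Rightarrow> real^'m^'m" where
  "dmetric p i = (\<chi> a b. pd i (\<lambda>q. g q $ a $ b) p)"

definition christ_first :: "real^'m \<Rightarrow> 'm \<Rightarrow> real^'m^'m" where
  "christ_first p i = (\<chi> l j. pd i (\<lambda>q. g q $ j $ l) p + pd j (\<lambda>q. g q $ i $ l) p - pd l (\<lambda>q. g q $ i $ j) p)"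

lemma metric_christ_mat:
  assumes "p \<in> U" shows "g p ** christ_mat p i = (1/2) *\<^sub>R christ_first p i"
proof -
  have "christ_mat p i = (1/2) *\<^sub>R (ginv g p ** christ_first p i)"
    unfolding christ_mat_def christ_first_def christ_def by (simp add: vec_eq_iff matrix_matrix_mult_def)
  then have "g p ** christ_mat p i = (1/2) *\<^sub>R (g p ** (ginv g p ** christ_first p i))"
    by (simp only: matrix_scalar_ac scalar_matrix_assoc matrix_mul_assoc)
  then show ?thesis by (simp only: matrix_mul_assoc ginv_right[OF assms] matrix_mul_lid)
qed

lemma christ_first_symmetric_part:
  assumes "p \<in> U" shows "(1/2) *\<^sub>R transpose (christ_first p i) + (1/2) *\<^sub>R christ_first p i = dmetric p i"
  unfolding christ_first_def dmetric_def transpose_def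
  using pd_metric_sym[OF assms, of i] by (simp add: vec_eq_iff field_simps)

lemma metric_compatible_axis:
  assumes p: "p \<in> U"
  shows "u \<bullet> (dmetric p i *v v) = gv g p (christ_mat p i *v u) v + gv g p u (christ_mat p i *v v)"
proof -
  have "transpose (christ_mat p i) ** g p = transpose (transpose (g p) ** christ_mat p i)"
    by (simp only: matrix_transpose_mul transpose_transpose)
  also have "\<dots> = (1/2) *\<^sub>R transpose (christ_first p i)"
    by (simp only: metric_sym[OF p] metric_christ_mat[OF p] transpose_scalar)
  finally have left: "gv g p (christ_mat p i *v u) v = u \<bullet> ((1/2) *\<^sub>R transpose (christ_first p i) *v v)"
    unfolding gv_def inner_matrix_left by (simp only: matrix_vector_mul_assoc)
  have right: "gv g p u (christ_mat p i *v v) = u \<bullet> ((1/2) *\<^sub>R christ_first p i *v v)"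
    unfolding gv_def by (simp only: matrix_vector_mul_assoc metric_christ_mat[OF p])
  show ?thesis
    unfolding left right christ_first_symmetric_part[OF p, symmetric]
    by (simp only: matrix_vector_mult_add_rdistrib inner_add_right)
qed

lemma metric_compatible:
  assumes p: "p \<in> U"
  shows "(\<Sum>i\<in>UNIV. x$i * (u \<bullet> (dmetric p i *v v))) = gv g p (Gamma p x u) v + gv g p u (Gamma p x v)"
  unfolding metric_compatible_axis[OF p] Gamma_def gv_def
  by (simp add: inner_sum_left inner_sum_right matrix_vector_mult_scaleR
      matrix_vector_mult_sum distrib_left sum.distrib)

lemma pd_gv_const:
  assumes p: "p \<in> U" shows "pd i (\<lambda>q. gv g q u v) p = u \<bullet> (dmetric p i *v v)"
proof -
  have "pd i (\<lambda>q. gv g q u v) p = pd i (\<lambda>q. \<Sum>a\<in>UNIV. u$a * (\<Sum>b\<in>UNIV. g q $ a $ b * v$b)) p"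
    unfolding gv_def inner_vec_def matrix_vector_mult_def by simp
  also have "\<dots> = (\<Sum>a\<in>UNIV. u$a * (\<Sum>b\<in>UNIV. pd i (\<lambda>q. g q $ a $ b) p * v$b))"
    by (simp add: pd_sum pd_mult has_pd_sum has_pd_mult has_pd_metric[OF p])
  finally show ?thesis unfolding dmetric_def inner_vec_def matrix_vector_mult_def by simp
qed

lemma pd_gv_field:
  assumes p: "p \<in> U" and F: "\<And>a. has_pd i (\<lambda>q. F q $ a) p"
  shows "pd i (\<lambda>q. gv g q (F q) v) p = (\<chi> a. pd i (\<lambda>q. F q $ a) p) \<bullet> (g p *v v) + F p \<bullet> (dmetric p i *v v)"
proof -
  have "pd i (\<lambda>q. gv g q (F q) v) p = pd i (\<lambda>q. \<Sum>a\<in>UNIV. F q $ a * (\<Sum>b\<in>UNIV. g q $ a $ b * v$b)) p"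
    unfolding gv_def inner_vec_def matrix_vector_mult_def by simp
  also have "\<dots> = (\<Sum>a\<in>UNIV. pd i (\<lambda>q. F q $ a) p * (\<Sum>b\<in>UNIV. g p $ a $ b * v$b)
       + F p $ a * (\<Sum>b\<in>UNIV. pd i (\<lambda>q. g q $ a $ b) p * v$b))"
    by (simp add: pd_sum pd_mult has_pd_sum has_pd_mult has_pd_metric[OF p] F)
  finally show ?thesis unfolding dmetric_def inner_vec_def matrix_vector_mult_def by (simp add: sum.distrib)
qed

lemma Dconn_field:
  "p \<in> U \<Longrightarrow> Dconn n g P (\<lambda>_. x) F p = LC g (\<lambda>_. x) F p
     + (1 / (2 * real n)) *\<^sub>R (gv g p x (F p) *\<^sub>R POmega p - gv g p (POmega p) (F p) *\<^sub>R x)"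
  by (simp add: Dconn_def lee_P POmega_def)

lemma Dconn_const:
  "q \<in> U \<Longrightarrow> Dconn n g P (\<lambda>_. y) (\<lambda>_. z) q
     = Gamma q y z + (1 / (2 * real n)) *\<^sub>R (gv g q y z *\<^sub>R POmega q - gv g q (POmega q) z *\<^sub>R y)"
  by (simp add: Dconn_field LC_const)

lemma pd_Dconn_const:
  assumes p: "p \<in> U"
  shows "pd i (\<lambda>q. Dconn n g P (\<lambda>_. y) (\<lambda>_. z) q $ s) p
    = pd i (\<lambda>q. Gamma q y z $ s) p + (1 / (2 * real n)) * ((y \<bullet> (dmetric p i *v z)) * POmega p $ s
       + gv g p y z * pd i (\<lambda>q. POmega q $ s) p
       - ((\<chi> a. pd i (\<lambda>q. POmega q $ a) p) \<bullet> (g p *v z) + POmega p \<bullet> (dmetric p i *v z)) * y $ s)"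
proof -
  define c where "c = 1 / (2 * real n)"
  have has_pd_Gamma: "has_pd i (\<lambda>q. Gamma q y z $ s) p"
    using has_pd_LC_const[OF p] by (simp add: LC_const)
  have has_pd_gv_const: "has_pd i (\<lambda>q. gv g q y z) p"
    and has_pd_gv_POmega: "has_pd i (\<lambda>q. gv g q (POmega q) z) p"
    using p by (intro has_pd_gv has_pd_metric has_pd_POmega has_pd_const; simp)+
  have "pd i (\<lambda>q. Dconn n g P (\<lambda>_. y) (\<lambda>_. z) q $ s) p
     = pd i (\<lambda>q. Gamma q y z $ s + c * (gv g q y z * POmega q $ s - gv g q (POmega q) z * y $ s)) p"
    by (rule pd_cong[OF open_U p]) (simp add: Dconn_const c_def)
  also have "\<dots> = pd i (\<lambda>q. Gamma q y z $ s) p + c * (pd i (\<lambda>q. gv g q y z) p * POmega p $ s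
       + gv g p y z * pd i (\<lambda>q. POmega q $ s) p - pd i (\<lambda>q. gv g q (POmega q) z) p * y $ s)"
    using has_pd_Gamma has_pd_gv_const has_pd_gv_POmega has_pd_POmega[OF p]
    by (simp add: pd_add pd_mult pd_diff has_pd_add has_pd_mult has_pd_diff)
  finally show ?thesis
    by (simp add: c_def pd_gv_const[OF p] pd_gv_field[OF p has_pd_POmega[OF p]])
qed

text \<open>Directional derivative of D_y z; metric compatibility turns the derivatives of g into
  Gamma-terms.\<close>
lemma dir_deriv_Dconn_const:
  assumes p: "p \<in> U"
  shows "dir_deriv (Dconn n g P (\<lambda>_. y) (\<lambda>_. z)) x p = dir_deriv (\<lambda>q. Gamma q y z) x p
    + (1 / (2 * real n)) *\<^sub>R ((gv g p (Gamma p x y) z + gv g p y (Gamma p x z)) *\<^sub>R POmega p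
       + gv g p y z *\<^sub>R dir_deriv POmega x p
       - (gv g p (dir_deriv POmega x p) z
          + (gv g p (Gamma p x (POmega p)) z + gv g p (POmega p) (Gamma p x z))) *\<^sub>R y)"
proof -
  have gv_dir_deriv: "gv g p (dir_deriv POmega x p) z
      = (\<Sum>i\<in>UNIV. x$i * ((\<chi> a. pd i (\<lambda>q. POmega q $ a) p) \<bullet> (g p *v z)))"
    unfolding dir_deriv_expand gv_def by (simp add: inner_sum_left)
  have "dir_deriv (Dconn n g P (\<lambda>_. y) (\<lambda>_. z)) x p = dir_deriv (\<lambda>q. Gamma q y z) x p
    + (1 / (2 * real n)) *\<^sub>R ((\<Sum>i\<in>UNIV. x$i * (y \<bullet> (dmetric p i *v z))) *\<^sub>R POmega p
       + gv g p y z *\<^sub>R dir_deriv POmega x p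
       - (gv g p (dir_deriv POmega x p) z
          + (\<Sum>i\<in>UNIV. x$i * (POmega p \<bullet> (dmetric p i *v z)))) *\<^sub>R y)"
    unfolding gv_dir_deriv unfolding dir_deriv_def
    by (simp add: vec_eq_iff pd_Dconn_const[OF p] sum_distrib_left sum_distrib_right sum.distrib
        sum_subtractf algebra_simps)
  then show ?thesis
    using metric_compatible[OF p, of x y z] metric_compatible[OF p, of x "POmega p" z]
    unfolding gv_def by simp
qed

text \<open>The second-order correction D_x D_y z - nabla_x nabla_y z on constant fields.\<close>
definition DD_correction :: "nat \<Rightarrow> real^'m \<Rightarrow> real^'m \<Rightarrow> real^'m \<Rightarrow> real^'m \<Rightarrow> real^'m" where
  "DD_correction n p x y z = (let c = 1 / (2 * real n); W = POmega p;
     T = gv g p y z *\<^sub>R W - gv g p W z *\<^sub>R y in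
     c *\<^sub>R ((gv g p (Gamma p x y) z + gv g p y (Gamma p x z)) *\<^sub>R W + gv g p y z *\<^sub>R dir_deriv POmega x p
        - (gv g p (dir_deriv POmega x p) z + (gv g p (Gamma p x W) z + gv g p W (Gamma p x z))) *\<^sub>R y)
     + Gamma p x (c *\<^sub>R T)
     + c *\<^sub>R (gv g p x (Gamma p y z + c *\<^sub>R T) *\<^sub>R W - gv g p W (Gamma p y z + c *\<^sub>R T) *\<^sub>R x))"

lemma DD_expand:
  assumes p: "p \<in> U"
  shows "Dconn n g P (\<lambda>_. x) (Dconn n g P (\<lambda>_. y) (\<lambda>_. z)) p
     = LC g (\<lambda>_. x) (LC g (\<lambda>_. y) (\<lambda>_. z)) p + DD_correction n p x y z"
proof -
  have LC_LC: "LC g (\<lambda>_. x) (LC g (\<lambda>_. y) (\<lambda>_. z)) p = dir_deriv (\<lambda>q. Gamma q y z) x p + Gamma p x (Gamma p y z)"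
  proof -
    have "LC g (\<lambda>_. y) (\<lambda>_. z) = (\<lambda>q. Gamma q y z)" by (rule ext) (rule LC_const)
    then show ?thesis by (simp add: LC_field)
  qed
  show ?thesis
    unfolding Dconn_field[OF p] LC_field[of x "Dconn n g P (\<lambda>_. y) (\<lambda>_. z)"] LC_LC
      DD_correction_def Let_def dir_deriv_Dconn_const[OF p] Dconn_const[OF p]
    by (simp add: LC_const Gamma_add Gamma_diff Gamma_scale algebra_simps)
qed

text \<open>The bilinear form S with R_D = R_nabla + psi_1(S).\<close>
definition shift_form :: "nat \<Rightarrow> real^'m \<Rightarrow> real^'m \<Rightarrow> real^'m \<Rightarrow> real" where
  "shift_form n p u v = (1 / (2 * real n)) * gv g p (LC g (\<lambda>_. u) POmega p) v
     + (1 / (2 * real n))^2 * gv g p (POmega p) u * gv g p (POmega p) v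
     - (1 / (2 * real n))^2 / 2 * gv g p (POmega p) (POmega p) * gv g p u v"

text \<open>R_D = R_nabla + psi_1(S): the Lie bracket of constant fields vanishes, so the curvature
  difference is the antisymmetrised correction, computed by the semi-symmetric algebra.\<close>
lemma curv_Dconn_shift:
  assumes p: "p \<in> U"
  shows "curv g (Dconn n g P) p x y z w = curv g (LC g) p x y z w + psi1 (gv g) (\<lambda>_. shift_form n p) p x y z w"
proof -
  have lie_const: "lie (\<lambda>_. x) (\<lambda>_. y) = (\<lambda>_. 0)" for x y :: "real^'m"
    unfolding lie_def by (rule ext) (simp add: vec_eq_iff)
  have zero_dir: "LC g (\<lambda>_. 0) (\<lambda>_. z) p = 0" "Dconn n g P (\<lambda>_. 0) (\<lambda>_. z) p = 0"
    unfolding Dconn_def by (simp_all add: LC_const Gamma_def gv_def)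
  have "curv g (Dconn n g P) p x y z w
      = curv g (LC g) p x y z w + gv g p (DD_correction n p x y z - DD_correction n p y x z) w"
    unfolding curv_def Let_def lie_const zero_dir DD_expand[OF p]
    by (simp add: gv_def inner_diff_left inner_add_left algebra_simps)
  also have "gv g p (DD_correction n p x y z - DD_correction n p y x z) w
      = psi1 (gv g) (\<lambda>_. shift_form n p) p x y z w"
    using semi_symmetric_curvature_shift[OF metric_sym[OF p] Gamma_sym[OF p] Gamma_add Gamma_scale,
        where dW = "\<lambda>x. dir_deriv POmega x p" and W = "POmega p" and c = "1 / (2 * real n)"
          and x = x and y = y and z = z and w = w]
    unfolding DD_correction_def Let_def shift_form_def psi1_def LC_field gv_def by simp
  finally show ?thesis .
qed

lemma shift_form_expand_right: "shift_form n p u v = (\<Sum>j\<in>UNIV. v$j * shift_form n p u (axis j 1))"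
  unfolding shift_form_def
  by (subst (1 2 3) gv_expand_right) (simp add: sum_distrib_left sum_subtractf sum.distrib algebra_simps)

lemma shift_form_expand_left: "shift_form n p u v = (\<Sum>i\<in>UNIV. u$i * shift_form n p (axis i 1) v)"
proof -
  have "LC g (\<lambda>_. u) POmega p = (\<Sum>i\<in>UNIV. u$i *\<^sub>R LC g (\<lambda>_. axis i 1) POmega p)"
    unfolding LC_field
    by (subst dir_deriv_axis_expand, subst Gamma_expand) (simp add: scaleR_add_right sum.distrib)
  then have nabla_W: "gv g p (LC g (\<lambda>_. u) POmega p) v
      = (\<Sum>i\<in>UNIV. u$i * gv g p (LC g (\<lambda>_. axis i 1) POmega p) v)"
    by (simp add: gv_sum_left)
  have W_u: "gv g p (POmega p) u = (\<Sum>i\<in>UNIV. u$i * gv g p (POmega p) (axis i 1))"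
    by (rule gv_expand_right)
  have u_v: "gv g p u v = (\<Sum>i\<in>UNIV. u$i * gv g p (axis i 1) v)"
    by (rule gv_expand_left)
  show ?thesis unfolding shift_form_def nabla_W W_u u_v
    by (simp add: sum_distrib_left sum_distrib_right sum_subtractf sum.distrib algebra_simps)
qed

end


theorem theorem5p1:
  fixes U :: "(real^'m::finite) set" and g P :: "real^'m \<Rightarrow> real^'m^'m" and n :: nat
  assumes "open U"
    and "CARD('m) = 2 * n" and "n \<ge> 2"
    and "riemannian_metric_on U g"
    and "almost_product_on U P g"
    and "class_W1 n U P g"
  shows "\<forall>p\<in>U. \<forall>x y z w.
           weyl n g (LC g) p x y z w = weyl n g (Dconn n g P) p x y z w"
proof (intro ballI allI)
  fix p x y z w
  assume p: "p \<in> U"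
  interpret almost_product_chart U g P
    using assms(1,4,5) by unfold_locales
  show "weyl n g (LC g) p x y z w = weyl n g (Dconn n g P) p x y z w"
    using weyl_shift_invariant[OF metric_sym[OF p] ginv_left[OF p] ginv_right[OF p]
        curv_Dconn_shift[OF p] shift_form_expand_left shift_form_expand_right assms(2,3)] .
qed

end
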